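(* For all integers $n \geq 0$ and $0 \leq k \leq n$, $$(-1)^k\, 2^{-2n}\binom{2n+1}{n-k}(2k+1) = (2n+1)\sum_{j=k}^{n}(-1)^j\, 2^{-2j}\binom{n}{j}\binom{2j+1}{j-k}.$$ *)

theory Defs
  imports Complex_Main
begin

end

theory Submission imports Defs "HOL-Computational_Algebra.Polynomial" begin

(* Proof idea: a generating-polynomial argument.  For any constant c the binomial theorem gives
     sum_j C(n,j) c^j x^(n-j) (1+x)^(2j+1) = (1+x) (x + c (1+x)^2)^n,
   and the coefficient of x^(n-k) on the left is exactly sum_{j=k..n} C(n,j) c^j C(2j+1, j-k).
   For c = -1/4 the inner factor collapses: x - (1+x)^2/4 = -(1-x)^2/4, so the right-hand side
   becomes (-1/4)^n (1+x)(1-x)^(2n).  The coefficient of x^m in (1+x)(1-x)^N is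
   (-1)^m (C(N,m) - C(N,m-1)), and (N+1) times it equals (-1)^m C(N+1,m) (N+1-2m).
   Taking N = 2n and m = n-k (so N+1-2m = 2k+1) and comparing coefficients yields the theorem. *)

text \<open>Coefficients of a power of a linear polynomial, valid for every index (the library
  version requires the index to be at most the exponent).\<close>
lemma coeff_linear_power:
  fixes a b :: "'a::comm_semiring_1"
  shows "coeff ([:a, b:] ^ n) i = of_nat (n choose i) * b ^ i * a ^ (n - i)"
proof (cases "i \<le> n")
  case True
  then show ?thesis by (rule coeff_linear_poly_power)
next
  case False
  have "degree ([:a, b:] ^ n) \<le> degree [:a, b:] * n" by (rule degree_power_le)
  also have "\<dots> \<le> n" by simp
  finally have "degree ([:a, b:] ^ n) < i" using False by simp
  then show ?thesis using False by (simp add: coeff_eq_0 binomial_eq_0)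
qed

lemma generating_polynomial_expansion:
  fixes c :: "'a::comm_ring_1"
  shows "(\<Sum>j\<le>n. smult (of_nat (n choose j) * c ^ j) (monom 1 (n - j) * [:1, 1:] ^ (2 * j + 1)))
       = [:1, 1:] * (smult c ([:1, 1:] ^ 2) + monom 1 1) ^ n"
proof -
  have "(smult c ([:1, 1:] ^ 2) + monom 1 1) ^ n
      = (\<Sum>j\<le>n. of_nat (n choose j) * smult c ([:1, 1:] ^ 2) ^ j * monom 1 1 ^ (n - j))"
    by (rule binomial_ring)
  also have "\<dots> = (\<Sum>j\<le>n. smult (of_nat (n choose j) * c ^ j) (monom 1 (n - j) * [:1, 1:] ^ (2 * j)))"
  proof (rule sum.cong [OF refl])
    fix j
    have "smult c ([:1, 1:] ^ 2) ^ j = smult (c ^ j) ([:1, 1:] ^ (2 * j))"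
      by (simp only: smult_power power_mult)
    then show "of_nat (n choose j) * smult c ([:1, 1:] ^ 2) ^ j * monom 1 1 ^ (n - j)
        = smult (of_nat (n choose j) * c ^ j) (monom 1 (n - j) * [:1, 1:] ^ (2 * j))"
      by (simp add: monom_power of_nat_poly mult_ac)
  qed
  finally show ?thesis
    by (simp add: sum_distrib_left mult_ac)
qed

text \<open>Coefficient of \<open>x^(n-k)\<close> in the expansion: the terms with \<open>j < k\<close> have too high a
  minimal degree, each remaining term contributes \<open>C(n,j) c^j C(2j+1, j-k)\<close>.\<close>
lemma coeff_generating_polynomial:
  fixes c :: "'a::comm_ring_1"
  assumes "k \<le> n"
  shows "coeff (\<Sum>j\<le>n. smult (of_nat (n choose j) * c ^ j) (monom 1 (n - j) * [:1, 1:] ^ (2 * j + 1))) (n - k)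
       = (\<Sum>j = k..n. of_nat (n choose j) * c ^ j * of_nat ((2 * j + 1) choose (j - k)))"
proof -
  have summand: "coeff (smult (of_nat (n choose j) * c ^ j) (monom 1 (n - j) * [:1, 1:] ^ (2 * j + 1))) (n - k)
      = (if j \<in> {k..n} then of_nat (n choose j) * c ^ j * of_nat ((2 * j + 1) choose (j - k)) else 0)"
    if "j \<le> n" for j
  proof (cases "j < k")
    case True
    then have "n - k < n - j" using that assms by simp
    then show ?thesis using True by (simp add: coeff_monom_mult)
  next
    case False
    then have "\<not> n - k < n - j" and "n - k - (n - j) = j - k" and "j \<in> {k..n}"
      using that by auto
    moreover have binom: "coeff ([:1, 1:] ^ (2 * j + 1)) (j - k) = of_nat ((2 * j + 1) choose (j - k))"
      by (simp only: coeff_linear_power) simp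
    ultimately show ?thesis
      by (simp only: coeff_smult coeff_monom_mult if_True if_False mult.assoc mult_1_left binom)
  qed
  have "coeff (\<Sum>j\<le>n. smult (of_nat (n choose j) * c ^ j) (monom 1 (n - j) * [:1, 1:] ^ (2 * j + 1))) (n - k)
      = (\<Sum>j\<le>n. if j \<in> {k..n} then of_nat (n choose j) * c ^ j * of_nat ((2 * j + 1) choose (j - k)) else 0)"
    unfolding coeff_sum by (rule sum.cong [OF refl], rule summand) simp
  also have "\<dots> = (\<Sum>j \<in> {..n} \<inter> {k..n}. of_nat (n choose j) * c ^ j * of_nat ((2 * j + 1) choose (j - k)))"
    by (simp only: sum.inter_restrict finite_atMost)
  also have "{..n} \<inter> {k..n} = {k..n}" by auto
  finally show ?thesis .
qed

text \<open>For \<open>c = -1/4\<close> the generating polynomial is \<open>(-1/4)^n (1+x)(1-x)^(2n)\<close>,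
  since \<open>x - (1+x)^2/4 = -(1-x)^2/4\<close>.\<close>
lemma generating_polynomial_quarter:
  "[:1, 1:] * (smult (-1/4 :: real) ([:1, 1:] ^ 2) + monom 1 1) ^ n
     = smult ((-1/4) ^ n) ([:1, 1:] * [:1, -1:] ^ (2 * n))"
proof -
  have "smult (-1/4 :: real) ([:1, 1:] ^ 2) + monom 1 1 = smult (-1/4) ([:1, -1:] ^ 2)"
    by (simp add: poly_eq_iff coeff_monom power2_eq_square coeff_pCons split: nat.split)
  then show ?thesis by (simp only: smult_power power_mult mult_smult_right)
qed

text \<open>Binomial form of \<open>(N+1)\<close> times a coefficient of \<open>(1+x)(1-x)^N\<close>: by absorption,
  \<open>(N+1)(C(N,m) - C(N,m-1)) = C(N+1,m)(N+1-2m)\<close>.\<close>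
lemma coeff_one_plus_x_times_power_one_minus_x:
  "real (N + 1) * coeff ([:1, 1:] * [:1, -1:] ^ N) m
     = (-1) ^ m * real (Suc N choose m) * (real N + 1 - 2 * real m)"
proof (cases m)
  case 0
  then show ?thesis by (simp add: mult_pCons_left coeff_linear_power)
next
  case (Suc i)
  have coeff: "coeff ([:1, 1:] * [:1, -1:] ^ N) m
      = (-1) ^ m * (real (N choose m) - real (N choose i))"
    using Suc by (simp add: mult_pCons_left coeff_linear_power algebra_simps)
  have absorb_comp: "(real N + 1 - real m) * real (Suc N choose m) = real (N + 1) * real (N choose m)"
  proof (cases "m \<le> Suc N")
    case True
    have "(Suc N - m) * (Suc N choose m) = (N + 1) * (N choose m)"
      using binomial_absorb_comp [of "Suc N" m] by simp
    then have "real (Suc N - m) * real (Suc N choose m) = real (N + 1) * real (N choose m)"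
      by (simp only: of_nat_mult [symmetric])
    then show ?thesis using True by (simp add: of_nat_diff algebra_simps)
  next
    case False
    then show ?thesis by (simp add: binomial_eq_0)
  qed
  have absorb: "real m * real (Suc N choose m) = real (N + 1) * real (N choose i)"
  proof -
    have "m * (Suc N choose m) = (N + 1) * (N choose i)"
      using binomial_absorption [of i "Suc N"] Suc by simp
    then show ?thesis by (simp only: of_nat_mult [symmetric])
  qed
  have "real (N + 1) * coeff ([:1, 1:] * [:1, -1:] ^ N) m
      = (-1) ^ m * (real (N + 1) * real (N choose m) - real (N + 1) * real (N choose i))"
    unfolding coeff by (simp add: algebra_simps)
  also have "\<dots> = (-1) ^ m * ((real N + 1 - real m) * real (Suc N choose m) - real m * real (Suc N choose m))"
    by (simp only: absorb_comp absorb)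
  also have "\<dots> = (-1) ^ m * real (Suc N choose m) * (real N + 1 - 2 * real m)"
    by (simp add: algebra_simps)
  finally show ?thesis .
qed

lemma alternating_sum_as_coeff:
  fixes n k :: nat
  assumes "k \<le> n"
  shows "(\<Sum>j = k..n. (-1::real) ^ j * (1 / 2 ^ (2 * j)) * real (n choose j) * real ((2 * j + 1) choose (j - k)))
       = (-1/4) ^ n * coeff ([:1, 1:] * [:1, -1:] ^ (2 * n)) (n - k)"
proof -
  have "(\<Sum>j = k..n. (-1::real) ^ j * (1 / 2 ^ (2 * j)) * real (n choose j) * real ((2 * j + 1) choose (j - k)))
      = (\<Sum>j = k..n. of_nat (n choose j) * (-1/4) ^ j * of_nat ((2 * j + 1) choose (j - k)))"
  proof (rule sum.cong [OF refl])
    fix j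
    have "(2 :: real) ^ (2 * j) = 4 ^ j" by (simp add: power_mult)
    then have "(-1/4 :: real) ^ j = (-1) ^ j * (1 / 2 ^ (2 * j))"
      by (simp only: power_divide) simp
    then show "(-1::real) ^ j * (1 / 2 ^ (2 * j)) * real (n choose j) * real ((2 * j + 1) choose (j - k))
        = of_nat (n choose j) * (-1/4) ^ j * of_nat ((2 * j + 1) choose (j - k))"
      by simp
  qed
  also have "\<dots> = (-1/4) ^ n * coeff ([:1, 1:] * [:1, -1:] ^ (2 * n)) (n - k)"
    using coeff_generating_polynomial [OF assms, of "-1/4 :: real"]
    unfolding generating_polynomial_expansion generating_polynomial_quarter coeff_smult
    by (rule sym)
  finally show ?thesis .
qed

text \<open>The signs combine because \<open>n + (n - k) = k + 2(n - k)\<close>.\<close>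
lemma quarter_power_sign:
  fixes n k :: nat
  assumes "k \<le> n"
  shows "(-1/4 :: real) ^ n * (-1) ^ (n - k) = (-1) ^ k * (1 / 2 ^ (2 * n))"
proof -
  have "(-1/4 :: real) ^ n * (-1) ^ (n - k) = (-1) ^ (n + (n - k)) / 4 ^ n"
    by (simp only: power_divide power_add) simp
  also have "n + (n - k) = k + 2 * (n - k)" using assms by simp
  also have "(4 :: real) ^ n = 2 ^ (2 * n)" by (simp add: power_mult)
  finally show ?thesis by (simp add: power_add power_mult)
qed

theorem mainTheorem12:
  fixes n k :: nat
  assumes "k \<le> n"
  shows "(-1::real) ^ k * (1 / 2 ^ (2 * n)) * real ((2 * n + 1) choose (n - k)) * real (2 * k + 1)
         = real (2 * n + 1) * (\<Sum>j = k..n. (-1::real) ^ j * (1 / 2 ^ (2 * j))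
              * real (n choose j) * real ((2 * j + 1) choose (j - k)))"
proof -
  have factor: "real (2 * n) + 1 - 2 * real (n - k) = real (2 * k + 1)" using assms by simp
  have "real (2 * n + 1) * ((-1/4) ^ n * coeff ([:1, 1:] * [:1, -1:] ^ (2 * n)) (n - k))
      = (-1/4) ^ n * (real (2 * n + 1) * coeff ([:1, 1:] * [:1, -1:] ^ (2 * n)) (n - k))"
    by (rule mult.left_commute)
  also have "\<dots> = ((-1/4) ^ n * (-1) ^ (n - k)) * real ((2 * n + 1) choose (n - k)) * real (2 * k + 1)"
    unfolding coeff_one_plus_x_times_power_one_minus_x factor by simp
  also have "\<dots> = (-1) ^ k * (1 / 2 ^ (2 * n)) * real ((2 * n + 1) choose (n - k)) * real (2 * k + 1)"
    unfolding quarter_power_sign [OF assms] ..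
  finally show ?thesis unfolding alternating_sum_as_coeff [OF assms] by (rule sym)
qed

end
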